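(* Let $\Omega\subsetneq\mathbb{S}^m$ be a domain and $\rho:\Omega\to\mathbb{R}$ a smooth proper function. Then the associated map $\phi:\Omega\to\mathbb{H}^{m+1}$ is proper.
   Context: $\mathbb{S}^m\subset\mathbb{R}^{m+1}$ is the unit sphere with round metric $g_0$; $\nabla$ and $|\cdot|$ denote gradient and norm with respect to $g_0$. Let $\mathbb{L}^{m+2}$ be $\mathbb{R}^{m+2}$ with $\langle\!\langle x,y\rangle\!\rangle=-x_0y_0+\sum_{i=1}^{m+1}x_iy_i$, and $\mathbb{H}^{m+1}=\{x:\langle\!\langle x,x\rangle\!\rangle=-1,\ x_0>0\}$. For $\rho\in C^1(\Omega)$ the associated map $\phi=\phi^\rho:\Omega\to\mathbb{H}^{m+1}$ is $$\phi(x)=\frac{e^{\rho(x)}}{2}\Big(1+e^{-2\rho(x)}\big(1+|\nabla\rho(x)|^2\big)\Big)(1,x)+e^{-\rho(x)}\big(0,-x+\nabla\rho(x)\big).$$ Proper means preimages of compact sets are compact. *)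

theory Defs
  imports "HOL-Analysis.Analysis"
begin

text \<open>The sphere S^m is sphere 0 1 in real^'n, where CARD('n) = m+1.
  Lorentz space L^{m+2} is modelled as real \<times> (real^'n) (first coordinate x_0).\<close>

definition lorentz_form :: "real \<times> (real^'n) \<Rightarrow> real \<times> (real^'n) \<Rightarrow> real" where
  "lorentz_form p q = - fst p * fst q + snd p \<bullet> snd q"

definition hyperbolic_space :: "(real \<times> (real^'n)) set" where
  "hyperbolic_space = {p. lorentz_form p p = -1 \<and> fst p > 0}"

coinductive smooth_on :: "(real^'n) set \<Rightarrow> (real^'n \<Rightarrow> real) \<Rightarrow> bool" where
  "\<lbrakk> continuous_on S f; \<forall>x\<in>S. f differentiable (at x);
     \<forall>i. smooth_on S (\<lambda>x. frechet_derivative f (at x) (axis i 1)) \<rbrakk>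
   \<Longrightarrow> smooth_on S f"

text \<open>A function on a subset of the sphere is extended 0-homogeneously to the open cone
  over it; its smoothness and its round-metric gradient are those of this extension
  (the euclidean gradient of the 0-homogeneous extension at a point of the sphere is
  the tangential, i.e. round-metric, gradient).\<close>

definition sph_ext :: "(real^'n \<Rightarrow> real) \<Rightarrow> real^'n \<Rightarrow> real" where
  "sph_ext \<rho> = (\<lambda>y. \<rho> (y /\<^sub>R norm y))"

definition sph_cone :: "(real^'n) set \<Rightarrow> (real^'n) set" where
  "sph_cone \<Omega> = {y. y \<noteq> 0 \<and> y /\<^sub>R norm y \<in> \<Omega>}"

definition sphere_smooth_on :: "(real^'n) set \<Rightarrow> (real^'n \<Rightarrow> real) \<Rightarrow> bool" where
  "sphere_smooth_on \<Omega> \<rho> \<longleftrightarrow> smooth_on (sph_cone \<Omega>) (sph_ext \<rho>)"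

definition sph_grad :: "(real^'n \<Rightarrow> real) \<Rightarrow> real^'n \<Rightarrow> real^'n" where
  "sph_grad \<rho> x = (\<chi> i. frechet_derivative (sph_ext \<rho>) (at x) (axis i 1))"

definition assoc_map :: "(real^'n \<Rightarrow> real) \<Rightarrow> real^'n \<Rightarrow> real \<times> (real^'n)" where
  "assoc_map \<rho> x =
     (exp (\<rho> x) / 2 * (1 + exp (-2 * \<rho> x) * (1 + (norm (sph_grad \<rho> x))\<^sup>2))) *\<^sub>R (1, x)
     + exp (- \<rho> x) *\<^sub>R (0, - x + sph_grad \<rho> x)"

definition preimage_compact_map :: "'a::topological_space set \<Rightarrow> 'b::topological_space set \<Rightarrow> ('a \<Rightarrow> 'b) \<Rightarrow> bool" where
  "preimage_compact_map S T f \<longleftrightarrow> (\<forall>K. K \<subseteq> T \<and> compact K \<longrightarrow> compact {x\<in>S. f x \<in> K})"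

end

theory Submission
  imports Defs
begin

text \<open>The time coordinate of \<open>\<phi>(x)\<close> is at least \<open>cosh \<rho>(x) \<ge> |\<rho>(x)|\<close>, so \<open>|\<rho>|\<close> is
  bounded on the preimage of any bounded set. Hence the preimage of a compact set \<open>K\<close> is a
  relatively closed subset (by continuity of \<open>\<phi>\<close>) of a compact sublevel set of \<open>|\<rho>|\<close> (by
  properness of \<open>\<rho>\<close>).\<close>

lemma preimage_compact_map_if_norm_dominates:
  fixes f :: "'a::topological_space \<Rightarrow> 'b::real_normed_vector" and g :: "'a \<Rightarrow> real"
  assumes f: "continuous_on S f"
    and g: "preimage_compact_map S UNIV g"
    and dom: "\<And>x. x \<in> S \<Longrightarrow> \<bar>g x\<bar> \<le> norm (f x)"
  shows "preimage_compact_map S T f"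
  unfolding preimage_compact_map_def
proof (intro allI impI)
  fix K assume "K \<subseteq> T \<and> compact K"
  then have K: "compact K" by simp
  obtain C where C: "\<And>y. y \<in> K \<Longrightarrow> norm y \<le> C"
    using K compact_imp_bounded bounded_iff by metis
  define A where "A = {x\<in>S. g x \<in> {-C..C}}"
  have "A \<subseteq> S"
    by (auto simp: A_def)
  have bounded_on_preimage: "g x \<in> {-C..C}" if "x \<in> S" "f x \<in> K" for x
    using dom[OF that(1)] C[OF that(2)] by (auto simp: abs_le_iff)
  have "compact A"
    using g unfolding preimage_compact_map_def A_def by blast
  moreover have "closedin (top_of_set A) (A \<inter> f -` K)"
    using continuous_on_subset[OF f \<open>A \<subseteq> S\<close>] compact_imp_closed[OF K]
    by (rule continuous_closedin_preimage)
  moreover have "{x\<in>S. f x \<in> K} = A \<inter> f -` K"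
    using bounded_on_preimage by (auto simp: A_def)
  ultimately show "compact {x\<in>S. f x \<in> K}"
    by (simp add: closedin_compact)
qed

lemma abs_le_cosh_real: "\<bar>x\<bar> \<le> cosh (x :: real)"
proof -
  have "\<bar>x\<bar> \<le> (1 + \<bar>x\<bar> + \<bar>x\<bar>\<^sup>2 / 2) / 2"
    using sum_power2_ge_zero[of "\<bar>x\<bar> - 1" 0] by (simp add: power2_eq_square algebra_simps)
  also have "\<dots> \<le> exp \<bar>x\<bar> / 2"
    using exp_lower_Taylor_quadratic[of "\<bar>x\<bar>"] by simp
  also have "\<dots> \<le> cosh \<bar>x\<bar>"
    by (simp add: cosh_field_def)
  finally show ?thesis by simp
qed

lemma cosh_le_fst_assoc_map: "cosh (\<rho> x) \<le> fst (assoc_map \<rho> x)"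
proof -
  have "exp (\<rho> x) * exp (-2 * \<rho> x) = exp (- \<rho> x)"
    by (simp flip: exp_add)
  then have "fst (assoc_map \<rho> x) =
      exp (\<rho> x) / 2 + exp (- \<rho> x) / 2 * (1 + (norm (sph_grad \<rho> x))\<^sup>2)"
    by (simp add: assoc_map_def algebra_simps)
  also have "\<dots> \<ge> exp (\<rho> x) / 2 + exp (- \<rho> x) / 2"
    by simp
  finally show ?thesis
    by (simp add: cosh_field_def)
qed

lemma abs_le_norm_assoc_map: "\<bar>\<rho> x\<bar> \<le> norm (assoc_map \<rho> x)"
proof -
  have "\<bar>\<rho> x\<bar> \<le> fst (assoc_map \<rho> x)"
    using abs_le_cosh_real cosh_le_fst_assoc_map by (rule order_trans)
  also have "\<dots> \<le> norm (assoc_map \<rho> x)"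
    using norm_fst_le[of "fst (assoc_map \<rho> x)" "snd (assoc_map \<rho> x)"] by simp
  finally show ?thesis .
qed

lemma smooth_on_imp_continuous_on: "smooth_on S f \<Longrightarrow> continuous_on S f"
  by (erule smooth_on.cases) auto

lemma smooth_on_partial_derivative:
  "smooth_on S f \<Longrightarrow> smooth_on S (\<lambda>x. frechet_derivative f (at x) (axis i 1))"
  by (erule smooth_on.cases) auto

lemma sphere_subset_sph_cone: "\<Omega> \<subseteq> sphere 0 1 \<Longrightarrow> \<Omega> \<subseteq> sph_cone \<Omega>"
  by (auto simp: sph_cone_def)

lemma sphere_smooth_on_imp_continuous_on:
  assumes "sphere_smooth_on \<Omega> \<rho>" "\<Omega> \<subseteq> sphere 0 1"
  shows "continuous_on \<Omega> \<rho>"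
proof -
  have "smooth_on (sph_cone \<Omega>) (sph_ext \<rho>)"
    using assms(1) by (simp add: sphere_smooth_on_def)
  then have "continuous_on \<Omega> (sph_ext \<rho>)"
    using sphere_subset_sph_cone[OF assms(2)]
    by (rule continuous_on_subset[OF smooth_on_imp_continuous_on])
  then show ?thesis
    by (rule continuous_on_eq) (use assms(2) in \<open>auto simp: sph_ext_def\<close>)
qed

lemma sphere_smooth_on_imp_continuous_on_sph_grad:
  assumes "sphere_smooth_on \<Omega> \<rho>" "\<Omega> \<subseteq> sphere 0 1"
  shows "continuous_on \<Omega> (sph_grad \<rho>)"
  unfolding sph_grad_def
proof (rule continuous_on_vec_lambda)
  fix i
  have "smooth_on (sph_cone \<Omega>) (sph_ext \<rho>)"
    using assms(1) by (simp add: sphere_smooth_on_def)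
  then have "continuous_on (sph_cone \<Omega>) (\<lambda>x. frechet_derivative (sph_ext \<rho>) (at x) (axis i 1))"
    by (intro smooth_on_imp_continuous_on smooth_on_partial_derivative)
  then show "continuous_on \<Omega> (\<lambda>x. frechet_derivative (sph_ext \<rho>) (at x) (axis i 1))"
    using sphere_subset_sph_cone[OF assms(2)] by (rule continuous_on_subset)
qed

lemma continuous_on_assoc_map:
  assumes "sphere_smooth_on \<Omega> \<rho>" "\<Omega> \<subseteq> sphere 0 1"
  shows "continuous_on \<Omega> (assoc_map \<rho>)"
  unfolding assoc_map_def
  using sphere_smooth_on_imp_continuous_on[OF assms]
    sphere_smooth_on_imp_continuous_on_sph_grad[OF assms]
  by (intro continuous_intros) auto

theorem mainTheorem2:
  fixes \<Omega> :: "(real^'n) set" and \<rho> :: "real^'n \<Rightarrow> real"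
  assumes "openin (top_of_set (sphere 0 1)) \<Omega>"
    and "connected \<Omega>"
    and "\<Omega> \<noteq> {}"
    and "\<Omega> \<subset> sphere 0 1"
    and "sphere_smooth_on \<Omega> \<rho>"
    and "preimage_compact_map \<Omega> (UNIV :: real set) \<rho>"
  shows "preimage_compact_map \<Omega> hyperbolic_space (assoc_map \<rho>)"
proof (rule preimage_compact_map_if_norm_dominates)
  show "continuous_on \<Omega> (assoc_map \<rho>)"
    using assms(5,4) by (intro continuous_on_assoc_map) auto
  show "preimage_compact_map \<Omega> UNIV \<rho>"
    by (fact assms(6))
  show "\<bar>\<rho> x\<bar> \<le> norm (assoc_map \<rho> x)" for x
    by (rule abs_le_norm_assoc_map)
qed

end
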